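(* Let $k$ be a positive integer. Every tournament with $n$ vertices and cutwidth at most $k$ has at most $A\cdot\exp\bigl(2C\sqrt{k(1+\ln 2k)}\bigr)\cdot(n+1)$ $k$-cuts, where $C=\pi\sqrt{2/3}$ and $A$ is a constant such that $p(m)\le\frac{A}{m+1}\exp(C\sqrt{m})$ for all integers $m\ge 0$.
   Context: A tournament is a simple digraph in which for every pair of distinct vertices $v,w$ exactly one of $(v,w),(w,v)$ is an arc. The width of an ordering $(v_1,\dots,v_n)$ of $V(T)$ is $\max_{1\le t\le n-1}|E(\{v_{t+1},\dots,v_n\},\{v_1,\dots,v_t\})|$, where $E(A,B)$ is the set of arcs with tail in $A$ and head in $B$; the cutwidth of $T$ is the minimum width over all orderings. A $k$-cut of a digraph $T$ is an ordered partition $(X,Y)$ of $V(T)$ (either part may be empty) such that there are at most $k$ arcs $(u,v)\in E(T)$ with $u\in Y$ and $v\in X$. $p(m)$ denotes the number of partitions of the integer $m$; such $A$ exists by the Hardy–Ramanujan estimate. *)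

theory Defs
  imports Complex_Main "HOL-Library.Multiset"
begin

definition tournament :: "'a set \<Rightarrow> ('a \<times> 'a) set \<Rightarrow> bool" where
  "tournament V E \<longleftrightarrow> finite V \<and> E \<subseteq> V \<times> V \<and> (\<forall>v. (v, v) \<notin> E) \<and>
     (\<forall>v\<in>V. \<forall>w\<in>V. v \<noteq> w \<longrightarrow> ((v, w) \<in> E \<longleftrightarrow> (w, v) \<notin> E))"

definition arcs_between :: "('a \<times> 'a) set \<Rightarrow> 'a set \<Rightarrow> 'a set \<Rightarrow> ('a \<times> 'a) set" where
  "arcs_between E A B = {(u, v) \<in> E. u \<in> A \<and> v \<in> B}"

definition ordering_width :: "('a \<times> 'a) set \<Rightarrow> 'a list \<Rightarrow> nat" where
  "ordering_width E vs = Max ({0} \<union>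
     {card (arcs_between E (set (drop t vs)) (set (take t vs))) | t. 1 \<le> t \<and> t \<le> length vs - 1})"

definition cutwidth :: "'a set \<Rightarrow> ('a \<times> 'a) set \<Rightarrow> nat" where
  "cutwidth V E = Min {ordering_width E vs | vs. distinct vs \<and> set vs = V}"

definition k_cuts :: "'a set \<Rightarrow> ('a \<times> 'a) set \<Rightarrow> nat \<Rightarrow> ('a set \<times> 'a set) set" where
  "k_cuts V E k = {(X, Y). X \<union> Y = V \<and> X \<inter> Y = {} \<and> card (arcs_between E Y X) \<le> k}"

definition partition_number :: "nat \<Rightarrow> nat" where
  "partition_number m = card {M :: nat multiset. (\<forall>x\<in>#M. 0 < x) \<and> sum_mset M = m}"

end

theory Submission
  imports Defs "HOL-Analysis.Harmonic_Numbers"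
begin

text \<open>
  Fix a vertex ordering of width at most \<open>k\<close> and a \<open>k\<close>-cut \<open>(X, Y)\<close>. If \<open>v\<^sub>i \<in> X\<close>, then every pair
  of a vertex of \<open>Y\<close> before position \<open>i\<close> and a vertex of \<open>X\<close> from position \<open>i\<close> on is joined by an
  arc, which either goes from \<open>Y\<close> to \<open>X\<close> or backwards across the cut of the ordering at \<open>i\<close>; so
  the product of the two counts is at most \<open>2k\<close>. Reading the ordering as a 0/1-word (1 for \<open>X\<close>),
  record for every 1 the number of 0s before it. The \<open>j\<close>-th largest of these numbers is then at
  most \<open>2k/j\<close>, so they form a partition of some \<open>m \<le> 2k (1 + ln 2k)\<close> together with at most
  \<open>n\<close> zero parts. As the word is recovered from this multiset, there are at most
  \<open>(n + 1) (m + 1) p(m)\<close> cuts, and the assumed bound on \<open>p\<close> finishes the proof.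
\<close>

fun gap_mset :: "nat \<Rightarrow> bool list \<Rightarrow> nat multiset" where
  "gap_mset c [] = {#}"
| "gap_mset c (True # w) = add_mset c (gap_mset c w)"
| "gap_mset c (False # w) = gap_mset (Suc c) w"

lemma gap_mset_ge: "x \<in># gap_mset c w \<Longrightarrow> c \<le> x"
  by (induction c w rule: gap_mset.induct) force+

lemma least_gap_mset_iff: "c \<in># gap_mset c (a # w) \<longleftrightarrow> a"
  using gap_mset_ge[of c "Suc c" w] by (cases a) auto

lemma size_gap_mset: "size (gap_mset c w) = length (filter id w)"
  by (induction c w rule: gap_mset.induct) auto

lemma gap_mset_eq_imp_eq:
  assumes "length w = length w'" and "gap_mset c w = gap_mset c w'"
  shows "w = w'"
  using assms
proof (induction w arbitrary: c w')
  case Nil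
  then show ?case by simp
next
  case (Cons a w)
  then obtain b w'' where w': "w' = b # w''"
    by (cases w') auto
  have "a = b"
    using Cons.prems(2) w' by (metis least_gap_mset_iff)
  with Cons w' show ?case
    by (cases b) auto
qed

text \<open>The \<open>j\<close>-th largest gap is at most \<open>K div j\<close>.\<close>

lemma sum_gap_mset_le:
  assumes "\<And>i. i < length w \<Longrightarrow> w ! i \<Longrightarrow>
      (c + length (filter Not (take i w))) * length (filter id (drop i w)) \<le> K"
  shows "sum_mset (gap_mset c w) \<le> (\<Sum>j=1..length (filter id w). K div j)"
  using assms
proof (induction w arbitrary: c)
  case Nil
  then show ?case by simp
next
  case (Cons b w)
  show ?case
  proof (cases b)
    case True
    have "c * (length (filter id w) + 1) \<le> K"
      using Cons.prems[of 0] True by (simp add: id_def)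
    then have "c \<le> K div (length (filter id w) + 1)"
      by (simp add: less_eq_div_iff_mult_less_eq)
    moreover have "sum_mset (gap_mset c w) \<le> (\<Sum>j=1..length (filter id w). K div j)"
      using Cons.prems[of "Suc i" for i] True by (intro Cons.IH) auto
    ultimately show ?thesis
      using True by (simp add: sum.cl_ivl_Suc id_def)
  next
    case False
    have "sum_mset (gap_mset (Suc c) w) \<le> (\<Sum>j=1..length (filter id w). K div j)"
      using Cons.prems[of "Suc i" for i] False by (intro Cons.IH) auto
    then show ?thesis
      using False by (simp add: id_def)
  qed
qed

definition partitions_upto :: "nat \<Rightarrow> nat multiset set" where
  "partitions_upto N = {M. (\<forall>x\<in>#M. 0 < x) \<and> sum_mset M \<le> N}"

lemma finite_partitions_upto: "finite (partitions_upto N)"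
proof (rule finite_subset)
  show "partitions_upto N \<subseteq> (\<Union>s\<in>{0..N}. multisets_of_size {0..N} s)"
  proof
    fix M
    assume "M \<in> partitions_upto N"
    then have pos: "\<forall>x\<in>#M. 0 < x" and sum: "sum_mset M \<le> N"
      by (auto simp: partitions_upto_def)
    have "set_mset M \<subseteq> {0..N}"
      using sum by (auto dest!: multi_member_split)
    moreover have "size M \<le> sum_mset M"
      using pos by (induction M) auto
    ultimately show "M \<in> (\<Union>s\<in>{0..N}. multisets_of_size {0..N} s)"
      using sum by (auto simp: multisets_of_size_def)
  qed
  show "finite (\<Union>s\<in>{0..N}. multisets_of_size {0..N} s)"
    by (intro finite_UN_I finite_atLeastAtMost finite_multisets_of_size)
qed

lemma partition_number_mono:
  assumes "m \<le> N"
  shows "partition_number m \<le> partition_number N"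
  unfolding partition_number_def
proof (rule card_inj_on_le)
  let ?pad = "\<lambda>M. M + replicate_mset (N - m) (1::nat)"
  show "inj_on ?pad {M. (\<forall>x\<in>#M. 0 < x) \<and> sum_mset M = m}"
    by (rule inj_onI) simp
  show "?pad ` {M. (\<forall>x\<in>#M. 0 < x) \<and> sum_mset M = m} \<subseteq> {M. (\<forall>x\<in>#M. 0 < x) \<and> sum_mset M = N}"
    using assms by (auto simp: sum_mset_replicate_mset split: if_splits)
  show "finite {M::nat multiset. (\<forall>x\<in>#M. 0 < x) \<and> sum_mset M = N}"
    by (rule finite_subset[OF _ finite_partitions_upto[of N]]) (auto simp: partitions_upto_def)
qed

lemma card_partitions_upto_le: "card (partitions_upto N) \<le> (N + 1) * partition_number N"
proof -
  have "partitions_upto N = (\<Union>m\<in>{0..N}. {M. (\<forall>x\<in>#M. 0 < x) \<and> sum_mset M = m})"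
    by (auto simp: partitions_upto_def)
  also have "card \<dots> \<le> (\<Sum>m\<in>{0..N}. partition_number m)"
    unfolding partition_number_def by (rule card_UN_le) simp
  also have "\<dots> \<le> (\<Sum>m\<in>{0..N}. partition_number N)"
    by (intro sum_mono partition_number_mono) simp
  finally show ?thesis
    by simp
qed

lemma multisets_zeros_sum_subset:
  "{M. count M 0 \<le> n \<and> sum_mset M \<le> N}
     \<subseteq> (\<lambda>(z, P). replicate_mset z 0 + P) ` ({0..n} \<times> partitions_upto N)"
proof
  fix M :: "nat multiset"
  assume M: "M \<in> {M. count M 0 \<le> n \<and> sum_mset M \<le> N}"
  have split: "M = replicate_mset (count M 0) 0 + filter_mset ((<) 0) M"
    using multiset_partition[of M "\<lambda>x. x = 0"] by (simp add: filter_eq_replicate_mset)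
  then have "sum_mset (filter_mset ((<) 0) M) \<le> N"
    using M by (metis mem_Collect_eq sum_mset.union le_add2 order_trans)
  then have "(count M 0, filter_mset ((<) 0) M) \<in> {0..n} \<times> partitions_upto N"
    using M by (auto simp: partitions_upto_def)
  then show "M \<in> (\<lambda>(z, P). replicate_mset z 0 + P) ` ({0..n} \<times> partitions_upto N)"
    by (subst split) (rule image_eqI[of _ _ "(count M 0, filter_mset ((<) 0) M)"], auto)
qed

lemma card_multisets_zeros_sum_le:
  "finite {M. count M 0 \<le> n \<and> sum_mset M \<le> N}"
  "card {M. count M 0 \<le> n \<and> sum_mset M \<le> N} \<le> (n + 1) * card (partitions_upto N)"
proof -
  have fin: "finite ({0..n} \<times> partitions_upto N)"
    by (simp add: finite_partitions_upto)
  show "finite {M. count M 0 \<le> n \<and> sum_mset M \<le> N}"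
    using fin multisets_zeros_sum_subset by (rule finite_surj)
  then have "card {M. count M 0 \<le> n \<and> sum_mset M \<le> N}
      \<le> card ((\<lambda>(z, P). replicate_mset z 0 + P) ` ({0..n} \<times> partitions_upto N))"
    using multisets_zeros_sum_subset fin by (intro card_mono) auto
  also have "\<dots> \<le> (n + 1) * card (partitions_upto N)"
    using card_image_le[OF fin] by (simp add: card_cartesian_product)
  finally show "card {M. count M 0 \<le> n \<and> sum_mset M \<le> N} \<le> (n + 1) * card (partitions_upto N)" .
qed

lemma card_partitions_upto_le_bound:
  assumes "real (partition_number N) \<le> B / (real N + 1)"
  shows "real (card (partitions_upto N)) \<le> B"
proof -
  have "real (card (partitions_upto N)) \<le> (real N + 1) * real (partition_number N)"
    using of_nat_mono[where 'a=real, OF card_partitions_upto_le[of N]] by (simp add: algebra_simps)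
  also have "\<dots> \<le> B"
    using assms by (simp add: field_simps)
  finally show ?thesis .
qed

lemma harm_le_one_plus_ln: "1 \<le> n \<Longrightarrow> (harm n :: real) \<le> 1 + ln (real n)"
  using euler_mascheroni_sequence_decreasing[of 1 n] by (simp add: harm_def)

lemma sum_div_le_mult_ln:
  assumes "1 \<le> K"
  shows "real (\<Sum>j=1..t. K div j) \<le> real K * (1 + ln (real K))"
proof -
  have "(\<Sum>j=1..t. K div j) \<le> (\<Sum>j=1..K. K div j)"
  proof (cases "t \<le> K")
    case True
    then show ?thesis by (intro sum_mono2) auto
  next
    case False
    then show ?thesis by (intro eq_imp_le sum.mono_neutral_right) auto
  qed
  then have "real (\<Sum>j=1..t. K div j) \<le> (\<Sum>j=1..K. real (K div j))"
    by (simp only: of_nat_sum[symmetric] of_nat_le_iff)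
  also have "\<dots> \<le> (\<Sum>j=1..K. real K / real j)"
    by (intro sum_mono of_nat_div_le_of_nat)
  also have "\<dots> = real K * harm K"
    by (simp add: harm_def sum_distrib_left divide_inverse)
  also have "\<dots> \<le> real K * (1 + ln (real K))"
    using harm_le_one_plus_ln[OF assms] by (simp add: mult_left_mono)
  finally show ?thesis .
qed

lemma sqrt_nat_floor_double_le:
  assumes "0 \<le> x"
  shows "sqrt (real (nat \<lfloor>2 * x\<rfloor>)) \<le> 2 * sqrt x"
proof -
  have "real (nat \<lfloor>2 * x\<rfloor>) = real_of_int \<lfloor>2 * x\<rfloor>"
    using assms by simp
  also have "\<dots> \<le> 4 * x"
    using assms of_int_floor_le[of "2 * x"] by linarith
  finally have "real (nat \<lfloor>2 * x\<rfloor>) \<le> 4 * x" .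
  then have "sqrt (real (nat \<lfloor>2 * x\<rfloor>)) \<le> sqrt (4 * x)"
    by (rule real_sqrt_le_mono)
  then show ?thesis
    by (simp add: real_sqrt_mult)
qed

lemma ordering_of_cutwidth:
  assumes "finite V" and "cutwidth V E \<le> k"
  obtains vs where "distinct vs" "set vs = V"
    "\<And>t. 1 \<le> t \<Longrightarrow> t < length vs \<Longrightarrow> card (arcs_between E (set (drop t vs)) (set (take t vs))) \<le> k"
proof -
  let ?orderings = "{vs. distinct vs \<and> set vs = V}"
  have "finite ?orderings"
    by (rule finite_subset[OF _ finite_lists_length_eq[OF assms(1), of "card V"]])
       (auto simp: distinct_card)
  moreover have "?orderings \<noteq> {}"
    using finite_distinct_list[OF assms(1)] by auto
  moreover have "{ordering_width E vs | vs. distinct vs \<and> set vs = V} = ordering_width E ` ?orderings"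
    by blast
  ultimately have "cutwidth V E \<in> ordering_width E ` ?orderings"
    unfolding cutwidth_def by (simp only:) (intro Min_in finite_imageI; simp)
  then obtain vs where vs: "distinct vs" "set vs = V" and width: "ordering_width E vs \<le> k"
    using assms(2) by auto
  have "card (arcs_between E (set (drop t vs)) (set (take t vs))) \<le> k"
    if "1 \<le> t" "t < length vs" for t
  proof -
    let ?cut = "\<lambda>t. card (arcs_between E (set (drop t vs)) (set (take t vs)))"
    have "{?cut t | t. 1 \<le> t \<and> t \<le> length vs - 1} = ?cut ` {1..length vs - 1}"
      by auto
    then have "?cut t \<le> ordering_width E vs"
      unfolding ordering_width_def using that by (intro Max_ge) auto
    with width show ?thesis
      by simp
  qed
  with vs that show ?thesis
    by blast
qed

lemma tournament_finite_arcs: "tournament V E \<Longrightarrow> finite (arcs_between E A B)"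
  unfolding tournament_def arcs_between_def
  by (metis (no_types, lifting) finite_SigmaI finite_subset case_prodE mem_Collect_eq subsetI)

lemma card_cut_sides_mult_le:
  assumes T: "tournament V E" and vs: "distinct vs" "set vs = V"
    and width: "\<And>t. 1 \<le> t \<Longrightarrow> t < length vs \<Longrightarrow>
      card (arcs_between E (set (drop t vs)) (set (take t vs))) \<le> k"
    and cut: "(X, Y) \<in> k_cuts V E k" and i: "i < length vs"
  shows "card (set (take i vs) - X) * card (set (drop i vs) \<inter> X) \<le> 2 * k"
proof (cases "i = 0")
  case True
  then show ?thesis by simp
next
  case False
  let ?before = "set (take i vs) - X" and ?after = "set (drop i vs) \<inter> X"
  let ?forward = "arcs_between E Y X"
  let ?backward = "arcs_between E (set (drop i vs)) (set (take i vs))"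
  have "?before \<times> ?after \<subseteq> ?forward \<union> prod.swap ` ?backward"
  proof
    fix p
    assume "p \<in> ?before \<times> ?after"
    then obtain a b where p: "p = (a, b)"
      and a: "a \<in> set (take i vs)" "a \<notin> X" and b: "b \<in> set (drop i vs)" "b \<in> X"
      by blast
    have "a \<noteq> b"
      using set_take_disj_set_drop_if_distinct[OF vs(1) order_refl] a b by blast
    moreover have "a \<in> V" "b \<in> V"
      using a b vs(2) by (auto dest: in_set_takeD in_set_dropD)
    ultimately have "(a, b) \<in> E \<or> (b, a) \<in> E"
      using T unfolding tournament_def by blast
    moreover have "a \<in> Y"
      using cut \<open>a \<in> V\<close> a(2) unfolding k_cuts_def by auto
    ultimately show "p \<in> ?forward \<union> prod.swap ` ?backward"
      using p a b unfolding arcs_between_def by force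
  qed
  then have "card (?before \<times> ?after) \<le> card (?forward \<union> prod.swap ` ?backward)"
    by (intro card_mono) (simp_all add: tournament_finite_arcs[OF T])
  also have "\<dots> \<le> card ?forward + card ?backward"
    using card_Un_le[of ?forward "prod.swap ` ?backward"]
      card_image_le[OF tournament_finite_arcs[OF T], of prod.swap "set (drop i vs)" "set (take i vs)"]
    by linarith
  also have "\<dots> \<le> 2 * k"
    using cut width[of i] False i unfolding k_cuts_def by simp
  finally show ?thesis
    by (simp add: card_cartesian_product)
qed

lemma length_filter_take_drop_map_mem:
  assumes "distinct vs"
  shows "length (filter Not (take i (map (\<lambda>v. v \<in> X) vs))) = card (set (take i vs) - X)"
    and "length (filter id (drop i (map (\<lambda>v. v \<in> X) vs))) = card (set (drop i vs) \<inter> X)"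
  using distinct_length_filter[of "take i vs"] distinct_length_filter[of "drop i vs"] assms
  by (simp_all add: take_map drop_map Diff_eq Int_commute comp_def Collect_neg_eq)

lemma card_k_cuts_le:
  assumes T: "tournament V E" and vs: "distinct vs" "set vs = V"
    and width: "\<And>t. 1 \<le> t \<Longrightarrow> t < length vs \<Longrightarrow>
      card (arcs_between E (set (drop t vs)) (set (take t vs))) \<le> k"
    and k: "0 < k"
  shows "card (k_cuts V E k)
      \<le> (card V + 1) * card (partitions_upto (nat \<lfloor>2 * (real k * (1 + ln (2 * real k)))\<rfloor>))"
proof -
  define N where "N = nat \<lfloor>2 * (real k * (1 + ln (2 * real k)))\<rfloor>"
  define word where "word X = map (\<lambda>v. v \<in> X) vs" for X
  define code where "code p = gap_mset 0 (word (fst p))" for p :: "'a set \<times> 'a set"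
  have code_sum: "sum_mset (code (X, Y)) \<le> N" if XY: "(X, Y) \<in> k_cuts V E k" for X Y
  proof -
    have "sum_mset (code (X, Y)) \<le> (\<Sum>j=1..length (filter id (word X)). (2 * k) div j)"
      unfolding code_def fst_conv
      by (rule sum_gap_mset_le)
         (simp add: word_def length_filter_take_drop_map_mem[OF vs(1)]
           card_cut_sides_mult_le[OF T vs width XY])
    then have "real (sum_mset (code (X, Y))) \<le> real (2 * k) * (1 + ln (real (2 * k)))"
      using sum_div_le_mult_ln[of "2 * k" "length (filter id (word X))"] k by linarith
    then show ?thesis
      unfolding N_def by (intro le_nat_floor) simp
  qed
  have "inj_on code (k_cuts V E k)"
  proof (rule inj_onI)
    fix p q
    assume p: "p \<in> k_cuts V E k" and q: "q \<in> k_cuts V E k" and "code p = code q"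
    then have "word (fst p) = word (fst q)"
      unfolding code_def by (intro gap_mset_eq_imp_eq) (simp_all add: word_def)
    then have "\<forall>v\<in>V. v \<in> fst p \<longleftrightarrow> v \<in> fst q"
      using vs(2) unfolding word_def by (auto simp: map_eq_conv)
    moreover have "fst p \<subseteq> V" "fst q \<subseteq> V" "snd p = V - fst p" "snd q = V - fst q"
      using p q unfolding k_cuts_def by auto
    ultimately show "p = q"
      by (metis prod.expand subset_antisym subsetI subsetD)
  qed
  moreover have "code ` k_cuts V E k \<subseteq> {M. count M 0 \<le> card V \<and> sum_mset M \<le> N}"
  proof clarify
    fix X Y
    assume XY: "(X, Y) \<in> k_cuts V E k"
    have "count (code (X, Y)) 0 \<le> size (code (X, Y))"
      by (rule count_le_size)
    also have "\<dots> \<le> card V"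
      unfolding code_def word_def size_gap_mset using vs
      by (metis distinct_card length_filter_le length_map fst_conv)
    finally show "count (code (X, Y)) 0 \<le> card V \<and> sum_mset (code (X, Y)) \<le> N"
      using code_sum[OF XY] by simp
  qed
  ultimately have "card (k_cuts V E k) \<le> card {M. count M 0 \<le> card V \<and> sum_mset M \<le> N}"
    by (rule card_inj_on_le) (rule card_multisets_zeros_sum_le(1))
  also have "\<dots> \<le> (card V + 1) * card (partitions_upto N)"
    by (rule card_multisets_zeros_sum_le(2))
  finally show ?thesis
    unfolding N_def .
qed

theorem mainTheorem12:
  fixes A :: real and k :: nat and V :: "'a set" and E :: "('a \<times> 'a) set"
  defines "C \<equiv> pi * sqrt (2 / 3)"
  assumes hA: "\<forall>m::nat. real (partition_number m) \<le> A / (real m + 1) * exp (C * sqrt (real m))"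
    and hk: "0 < k"
    and hT: "tournament V E"
    and hcw: "cutwidth V E \<le> k"
  shows "real (card (k_cuts V E k))
           \<le> A * exp (2 * C * sqrt (real k * (1 + ln (2 * real k)))) * (real (card V) + 1)"
proof -
  define x where "x = real k * (1 + ln (2 * real k))"
  define N where "N = nat \<lfloor>2 * x\<rfloor>"
  obtain vs where vs: "distinct vs" "set vs = V" and
    width: "\<And>t. 1 \<le> t \<Longrightarrow> t < length vs \<Longrightarrow> card (arcs_between E (set (drop t vs)) (set (take t vs))) \<le> k"
    using ordering_of_cutwidth[OF _ hcw] hT unfolding tournament_def by blast
  have "0 \<le> A"
    using hA[rule_format, of 0] by (simp add: zero_le_mult_iff order_trans[OF of_nat_0_le_iff])
  moreover have "0 \<le> C" "0 \<le> x"
    using hk unfolding C_def x_def by simp_all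
  then have "C * sqrt (real N) \<le> C * (2 * sqrt x)"
    unfolding N_def by (intro mult_left_mono sqrt_nat_floor_double_le)
  ultimately have exp_bound: "A * exp (C * sqrt (real N)) \<le> A * exp (2 * C * sqrt x)"
    by (intro mult_left_mono) (simp_all add: mult.assoc)
  have "real (card (k_cuts V E k)) \<le> (real (card V) + 1) * real (card (partitions_upto N))"
    using of_nat_mono[where 'a=real, OF card_k_cuts_le[OF hT vs width hk]]
    unfolding N_def x_def by (simp add: algebra_simps)
  also have "\<dots> \<le> (real (card V) + 1) * (A * exp (2 * C * sqrt x))"
    using hA[rule_format, of N] card_partitions_upto_le_bound[of N "A * exp (C * sqrt (real N))"] exp_bound
    by (intro mult_left_mono) (simp_all add: times_divide_eq_left)
  finally show ?thesis
    unfolding x_def by (simp only: mult.commute[of "real (card V) + 1"])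
qed

end
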